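(* Let $\mathcal{P}\subseteq\mathbb{Z}_{\geq0}$ with $0\in\mathcal{P}$, working with formal power series over a commutative ring $R\supseteq\mathbb{Q}$. Then for every $n\ge0$, $$[z^n]\,P^\mathcal{P}(z) = [z^{n}]\,e_\mathcal{P}(z)^n e^z.$$
   Context: $[n]=\{1,\dots,n\}$; $[z^n]g$ is the coefficient of $z^n$. $e_\mathcal{P}(z)=\sum_{n\in\mathcal{P}}z^n/n!$ and $e^z=\sum_{n\ge0}z^n/n!$. $P^\mathcal{P}(z)=\sum_{n\ge0}p_nz^n/n!$, where $p_n$ is the number of partial functions $f$ on $[n]$ (maps from some subset $S\subseteq[n]$ into $[n]$) with $|f^{-1}(x)|\in\mathcal{P}$ for every $x\in[n]$. *)

theory Defs
  imports "HOL-Computational_Algebra.Formal_Power_Series"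
begin

text \<open>Partial functions on [n]: maps from a subset S of {1..n} into {1..n},
  represented as Isabelle maps nat \<Rightarrow> nat option (S = dom f).\<close>
definition partial_funs_on :: "nat \<Rightarrow> (nat \<Rightarrow> nat option) set" where
  "partial_funs_on n = {f. dom f \<subseteq> {1..n} \<and> ran f \<subseteq> {1..n}}"

definition p_count :: "nat set \<Rightarrow> nat \<Rightarrow> nat" where
  "p_count P n = card {f \<in> partial_funs_on n.
      \<forall>x \<in> {1..n}. card {y. f y = Some x} \<in> P}"

definition e_set :: "nat set \<Rightarrow> 'a :: field_char_0 fps" where
  "e_set P = Abs_fps (\<lambda>n. if n \<in> P then 1 / fact n else 0)"

definition PF_egf :: "nat set \<Rightarrow> 'a :: field_char_0 fps" where
  "PF_egf P = Abs_fps (\<lambda>n. of_nat (p_count P n) / fact n)"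

end

theory Submission
  imports Defs
begin

text \<open>A partial function on [n] is a choice of domain S \<subseteq> [n] together with a map from S
  whose fibres over [n] have sizes in P. Removing the fibre over one point t of the codomain
  leaves such a map on a smaller domain, and the fibre itself is an arbitrary subset of the
  domain whose size lies in P; so the number of these maps from an m-set to a k-set is the
  exponential-generating-function coefficient m! [z^m] e_P(z)^k. Summing over the domains
  S \<subseteq> [n] multiplies the EGF by e^z.\<close>

definition fibre_maps :: "nat set \<Rightarrow> 'b set \<Rightarrow> 'c set \<Rightarrow> ('b \<Rightarrow> 'c option) set" where
  "fibre_maps P S T = {f. dom f = S \<and> ran f \<subseteq> T \<and> (\<forall>x\<in>T. card {y. f y = Some x} \<in> P)}"

lemma sum_Pow_card:
  fixes h :: "nat \<Rightarrow> 'a::comm_semiring_1"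
  assumes "finite S"
  shows "(\<Sum>B\<in>Pow S. h (card B)) = (\<Sum>j=0..card S. of_nat (card S choose j) * h j)"
proof -
  have "(\<Sum>B\<in>Pow S. h (card B)) = (\<Sum>j=0..card S. \<Sum>B\<in>{B \<in> Pow S. card B = j}. h (card B))"
    by (rule sum.group[symmetric]) (auto simp: assms card_mono)
  also have "\<dots> = (\<Sum>j=0..card S. of_nat (card S choose j) * h j)"
    by (rule sum.cong) (simp_all add: n_subsets[OF assms] Pow_def)
  finally show ?thesis .
qed

lemma fact_mult_fps_nth_mult:
  fixes f g :: "'a::field_char_0 fps"
  shows "fact n * fps_nth (f * g) n
    = (\<Sum>j=0..n. of_nat (n choose j) * (fact j * fps_nth f j) * (fact (n - j) * fps_nth g (n - j)))"
proof -
  have "fact n * fps_nth (f * g) n = (\<Sum>j=0..n. fact n * (fps_nth f j * fps_nth g (n - j)))"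
    by (simp add: fps_mult_nth sum_distrib_left)
  also have "\<dots> = (\<Sum>j=0..n. of_nat (n choose j) * (fact j * fps_nth f j) * (fact (n - j) * fps_nth g (n - j)))"
  proof (rule sum.cong[OF refl])
    fix j assume "j \<in> {0..n}"
    then have "fact n = (of_nat (n choose j) * fact j * fact (n - j) :: 'a)"
      by (simp add: binomial_fact)
    then show "fact n * (fps_nth f j * fps_nth g (n - j))
        = of_nat (n choose j) * (fact j * fps_nth f j) * (fact (n - j) * fps_nth g (n - j))"
      by (simp add: mult_ac)
  qed
  finally show ?thesis .
qed

lemma fact_mult_fps_nth_e_set: "fact n * fps_nth (e_set P :: 'a::field_char_0 fps) n = of_bool (n \<in> P)"
  by (simp add: e_set_def)

lemma finite_fibre_maps: "finite S \<Longrightarrow> finite T \<Longrightarrow> finite (fibre_maps P S T)"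
  by (rule finite_subset[OF _ finite_set_of_finite_maps]) (auto simp: fibre_maps_def)

lemma fibre_maps_empty: "fibre_maps P S {} = (if S = {} then {Map.empty} else {})"
  by (auto simp: fibre_maps_def ran_def dom_def)

lemma remove_fibre_in_fibre_maps:
  assumes "t \<notin> T" and f: "f \<in> fibre_maps P S (insert t T)"
  shows "(\<lambda>y. if f y = Some t then None else f y) \<in> fibre_maps P (S - {y. f y = Some t}) T"
proof -
  have "{y. (if f y = Some t then None else f y) = Some u} = {y. f y = Some u}" if "u \<in> T" for u
    using that assms by auto
  with f show ?thesis
    unfolding fibre_maps_def ran_def dom_def by (auto split: if_splits)
qed

lemma add_fibre_in_fibre_maps:
  assumes "t \<notin> T" "B \<subseteq> S" "card B \<in> P" and g: "g \<in> fibre_maps P (S - B) T"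
  shows "(\<lambda>y. if y \<in> B then Some t else g y) \<in> fibre_maps P S (insert t T)"
proof -
  let ?f = "\<lambda>y. if y \<in> B then Some t else g y"
  have "{y. ?f y = Some t} = B"
    using g assms(1) by (auto simp: fibre_maps_def ran_def)
  moreover have "{y. ?f y = Some u} = {y. g y = Some u}" if "u \<in> T" for u
    using g that assms(1) by (auto simp: fibre_maps_def dom_def)
  moreover have "dom ?f = S" "ran ?f \<subseteq> insert t T"
    using g assms(2) by (auto simp: fibre_maps_def dom_def ran_def)
  ultimately show ?thesis
    using g assms(3) unfolding fibre_maps_def by auto
qed

lemma fibre_maps_insert_bij:
  assumes "t \<notin> T"
  shows "bij_betw (\<lambda>f. ({y. f y = Some t}, \<lambda>y. if f y = Some t then None else f y))
     (fibre_maps P S (insert t T)) (SIGMA B:{B. B \<subseteq> S \<and> card B \<in> P}. fibre_maps P (S - B) T)"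
proof (rule bij_betw_byWitness[where f' = "\<lambda>(B, g) y. if y \<in> B then Some t else g y"])
  show "\<forall>f\<in>fibre_maps P S (insert t T). (\<lambda>(B, g) y. if y \<in> B then Some t else g y)
          ({y. f y = Some t}, \<lambda>y. if f y = Some t then None else f y) = f"
    by auto
  show "\<forall>p\<in>SIGMA B:{B. B \<subseteq> S \<and> card B \<in> P}. fibre_maps P (S - B) T.
          (\<lambda>f. ({y. f y = Some t}, \<lambda>y. if f y = Some t then None else f y))
            ((\<lambda>(B, g) y. if y \<in> B then Some t else g y) p) = p"
  proof
    fix p assume "p \<in> (SIGMA B:{B. B \<subseteq> S \<and> card B \<in> P}. fibre_maps P (S - B) T)"
    then obtain B g where p: "p = (B, g)" and g: "g \<in> fibre_maps P (S - B) T" by auto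
    have "g y \<noteq> Some t" "y \<in> B \<Longrightarrow> g y = None" for y
      using g assms by (auto simp: fibre_maps_def ran_def dom_def)
    then show "(\<lambda>f. ({y. f y = Some t}, \<lambda>y. if f y = Some t then None else f y))
            ((\<lambda>(B, g) y. if y \<in> B then Some t else g y) p) = p"
      unfolding p by (auto simp: fun_eq_iff)
  qed
  show "(\<lambda>f. ({y. f y = Some t}, \<lambda>y. if f y = Some t then None else f y)) ` fibre_maps P S (insert t T)
        \<subseteq> (SIGMA B:{B. B \<subseteq> S \<and> card B \<in> P}. fibre_maps P (S - B) T)"
    using remove_fibre_in_fibre_maps[OF assms] by (auto simp: fibre_maps_def)
  show "(\<lambda>(B, g) y. if y \<in> B then Some t else g y)
          ` (SIGMA B:{B. B \<subseteq> S \<and> card B \<in> P}. fibre_maps P (S - B) T) \<subseteq> fibre_maps P S (insert t T)"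
    using add_fibre_in_fibre_maps[OF assms] by auto
qed

lemma card_fibre_maps:
  assumes "finite S" "finite T"
  shows "(of_nat (card (fibre_maps P S T)) :: 'a::field_char_0)
    = fact (card S) * fps_nth (e_set P ^ card T) (card S)"
  using assms(2,1)
proof (induction T arbitrary: S rule: finite_induct)
  case empty
  then show ?case by (simp add: fibre_maps_empty)
next
  case (insert t T)
  let ?c = "\<lambda>j. fact j * fps_nth (e_set P ^ card T :: 'a fps) j"
  let ?I = "{B. B \<subseteq> S \<and> card B \<in> P}"
  have finI: "finite ?I"
    by (rule finite_subset[of _ "Pow S"]) (auto simp: insert.prems)
  have "(of_nat (card (fibre_maps P S (insert t T))) :: 'a)
      = of_nat (card (SIGMA B:?I. fibre_maps P (S - B) T))"
    using bij_betw_same_card[OF fibre_maps_insert_bij[OF insert.hyps(2)]] by simp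
  also have "\<dots> = (\<Sum>B\<in>?I. of_nat (card (fibre_maps P (S - B) T)))"
    using insert.hyps(1) insert.prems finI by (simp add: card_SigmaI finite_fibre_maps)
  also have "\<dots> = (\<Sum>B\<in>?I. ?c (card S - card B))"
  proof (rule sum.cong[OF refl])
    fix B assume "B \<in> ?I"
    then have "card (S - B) = card S - card B"
      using insert.prems by (intro card_Diff_subset) (auto intro: finite_subset)
    then show "of_nat (card (fibre_maps P (S - B) T)) = ?c (card S - card B)"
      using insert.IH[of "S - B"] insert.prems by simp
  qed
  also have "\<dots> = (\<Sum>B\<in>Pow S. if card B \<in> P then ?c (card S - card B) else 0)"
  proof -
    have "?I = {B \<in> Pow S. card B \<in> P}" by auto
    then show ?thesis
      using sum.inter_filter[of "Pow S"] insert.prems by simp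
  qed
  also have "\<dots> = (\<Sum>B\<in>Pow S. (\<lambda>j. fact j * fps_nth (e_set P) j * ?c (card S - j)) (card B))"
    by (intro sum.cong) (simp_all add: fact_mult_fps_nth_e_set)
  also have "\<dots> = (\<Sum>j=0..card S. of_nat (card S choose j) * (fact j * fps_nth (e_set P) j) * ?c (card S - j))"
    using sum_Pow_card[OF insert.prems] by (simp add: mult.assoc)
  also have "\<dots> = fact (card S) * fps_nth (e_set P * e_set P ^ card T) (card S)"
    by (rule fact_mult_fps_nth_mult[symmetric])
  also have "\<dots> = fact (card S) * fps_nth (e_set P ^ card (insert t T)) (card S)"
    using insert.hyps by simp
  finally show ?case .
qed

lemma p_count_eq_fact_mult_fps_nth:
  "(of_nat (p_count P n) :: 'a::field_char_0) = fact n * fps_nth (e_set P ^ n * fps_exp 1) n"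
proof -
  have partition: "{f \<in> partial_funs_on n. \<forall>x \<in> {1..n}. card {y. f y = Some x} \<in> P}
      = (\<Union>S\<in>Pow {1..n}. fibre_maps P S {1..n})"
    by (auto simp: partial_funs_on_def fibre_maps_def)
  have "\<forall>S\<in>Pow {1..n}. finite (fibre_maps P S {1..n})"
    by (meson PowD finite_atLeastAtMost finite_subset finite_fibre_maps)
  then have "p_count P n = (\<Sum>S\<in>Pow {1..n}. card (fibre_maps P S {1..n}))"
    unfolding p_count_def partition
    by (intro card_UN_disjoint) (auto simp: fibre_maps_def)
  then have "(of_nat (p_count P n) :: 'a)
      = (\<Sum>S\<in>Pow {1..n}. (\<lambda>j. fact j * fps_nth (e_set P ^ n) j) (card S))"
    by (simp add: card_fibre_maps finite_subset)
  also have "\<dots> = (\<Sum>j=0..n. of_nat (n choose j) * (fact j * fps_nth (e_set P ^ n) j)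
                             * (fact (n - j) * fps_nth (fps_exp 1) (n - j)))"
    using sum_Pow_card[of "{1..n}"] by simp
  also have "\<dots> = fact n * fps_nth (e_set P ^ n * fps_exp 1) n"
    by (rule fact_mult_fps_nth_mult[symmetric])
  finally show ?thesis .
qed

theorem corollary5p13:
  fixes P :: "nat set" and n :: nat
  assumes "0 \<in> P"
  shows "fps_nth (PF_egf P :: 'a :: field_char_0 fps) n
           = fps_nth (e_set P ^ n * fps_exp 1) n"
  by (simp add: PF_egf_def p_count_eq_fact_mult_fps_nth)

end
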